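(* Let $k\in\mathbb N$, $f=\lambda z+\mathrm{h.o.t.}\in\mathcal L_k$ with $0<\lambda<1$, and let $\beta>1$. Define $W_1\subseteq\mathbb R\times\mathbb Z^k$ as the additive semigroup generated by $$\mathrm{Supp}(f)\cup\{(\alpha-1,\boldsymbol m):(\alpha,\boldsymbol m)\in\mathrm{Supp}(f-\lambda\,\mathrm{id})\}\cup\{(0,1,0,\dots,0),\dots,(0,\dots,0,1)\},$$ inductively $W_{n+1}$ as the additive semigroup generated by $$W_n\cup\{(\beta_1,\boldsymbol m_1)+\cdots+(\beta_{n+1},\boldsymbol m_{n+1})-(n,\mathbf 0_k):(\beta_i,\boldsymbol m_i)\in W_n,\ \beta_i>1\},$$ and set $W:=\bigcup_{n\ge1}W_n$, $W_\beta:=W\cap(\mathbb R_{\ge\beta}\times\mathbb Z^k)$. Then $W_\beta$ is well-ordered (for the lexicographic order) and for every $m\ge2$ and all $(\beta_1,\boldsymbol m_1),\dots,(\beta_m,\boldsymbol m_m)\in W_\beta$, $$(\beta_1,\boldsymbol m_1)+\cdots+(\beta_m,\boldsymbol m_m)-(m-1,\mathbf 0_k)\in W_\beta.$$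
   Context: $z$ infinitesimal; $\boldsymbol\ell_1:=-1/\ln z$, $\boldsymbol\ell_{j+1}:=\boldsymbol\ell_j\circ\boldsymbol\ell_1$. $\mathcal L_k$: formal sums $\sum a_{\alpha,n_1,\dots,n_k}z^\alpha\boldsymbol\ell_1^{n_1}\cdots\boldsymbol\ell_k^{n_k}$, real coefficients, well-ordered support $\mathrm{Supp}(f)$ in $\mathbb R_{\ge0}\times\mathbb Z^k$ (lexicographic order). The vectors $(0,1,0,\dots,0),\dots,(0,\dots,0,1)$ are the unit vectors of $\mathbb R\times\mathbb Z^k$ in the $\mathbb Z^k$ coordinates; $\mathbf 0_k=(0,\dots,0)\in\mathbb Z^k$. *)

theory Defs
  imports Main "HOL.Real"
begin

text \<open>Points of \<open>\<real> \<times> \<int>^k\<close> are represented as pairs (alpha, m) with m an integer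
list of length k.  A transseries f in L_k is represented by its coefficient function
c :: pt => real; its support is the set of points with nonzero coefficient.\<close>

type_synonym pt = "real \<times> int list"

definition zvec :: "nat \<Rightarrow> int list" where
  "zvec k = replicate k 0"

definition unitvec :: "nat \<Rightarrow> nat \<Rightarrow> pt" where
  "unitvec k i = (0, (replicate k 0)[i := 1])"

definition padd :: "pt \<Rightarrow> pt \<Rightarrow> pt" where
  "padd p q = (fst p + fst q, map2 (+) (snd p) (snd q))"

definition psub :: "pt \<Rightarrow> pt \<Rightarrow> pt" where
  "psub p q = (fst p - fst q, map2 (-) (snd p) (snd q))"

definition psum :: "nat \<Rightarrow> pt list \<Rightarrow> pt" where
  "psum k xs = foldr padd xs (0, zvec k)"

definition vlex_less :: "int list \<Rightarrow> int list \<Rightarrow> bool" where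
  "vlex_less m n \<longleftrightarrow> (\<exists>i < length m. take i m = take i n \<and> m ! i < n ! i)"

definition lex_less :: "pt \<Rightarrow> pt \<Rightarrow> bool" where
  "lex_less p q \<longleftrightarrow> fst p < fst q \<or> (fst p = fst q \<and> vlex_less (snd p) (snd q))"

definition lex_le :: "pt \<Rightarrow> pt \<Rightarrow> bool" where
  "lex_le p q \<longleftrightarrow> p = q \<or> lex_less p q"

definition lex_wellordered :: "pt set \<Rightarrow> bool" where
  "lex_wellordered S \<longleftrightarrow> (\<forall>T \<subseteq> S. T \<noteq> {} \<longrightarrow> (\<exists>t\<in>T. \<forall>u\<in>T. lex_le t u))"

inductive_set semigroup_gen :: "pt set \<Rightarrow> pt set" for G where
  gen: "x \<in> G \<Longrightarrow> x \<in> semigroup_gen G"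
| add: "x \<in> semigroup_gen G \<Longrightarrow> y \<in> semigroup_gen G \<Longrightarrow> padd x y \<in> semigroup_gen G"

definition supp :: "(pt \<Rightarrow> real) \<Rightarrow> pt set" where
  "supp c = {p. c p \<noteq> 0}"

definition in_Lk :: "nat \<Rightarrow> (pt \<Rightarrow> real) \<Rightarrow> bool" where
  "in_Lk k c \<longleftrightarrow> supp c \<subseteq> {p. fst p \<ge> 0 \<and> length (snd p) = k} \<and> lex_wellordered (supp c)"

text \<open>f = lambda z + h.o.t.: coefficient lambda at (1, 0_k), all other support points
lexicographically larger (higher order).\<close>
definition leading_lambda_z :: "nat \<Rightarrow> (pt \<Rightarrow> real) \<Rightarrow> real \<Rightarrow> bool" where
  "leading_lambda_z k c lam \<longleftrightarrow> c (1, zvec k) = lam \<and> (\<forall>p \<in> supp c. lex_le (1, zvec k) p)"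

definition minus_lin :: "nat \<Rightarrow> (pt \<Rightarrow> real) \<Rightarrow> real \<Rightarrow> pt \<Rightarrow> real" where
  "minus_lin k c lam p = c p - (if p = (1, zvec k) then lam else 0)"

definition W1_gens :: "nat \<Rightarrow> (pt \<Rightarrow> real) \<Rightarrow> real \<Rightarrow> pt set" where
  "W1_gens k c lam = supp c \<union> {(fst p - 1, snd p) | p. p \<in> supp (minus_lin k c lam)}
                   \<union> {unitvec k i | i. i < k}"

text \<open>Wseq k c lambda n is W_{n+1} of the paper.\<close>
primrec Wseq :: "nat \<Rightarrow> (pt \<Rightarrow> real) \<Rightarrow> real \<Rightarrow> nat \<Rightarrow> pt set" where
  "Wseq k c lam 0 = semigroup_gen (W1_gens k c lam)"
| "Wseq k c lam (Suc n) = semigroup_gen (Wseq k c lam n \<union>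
      {psub (psum k xs) (real (n + 1), zvec k) | xs.
         length xs = n + 2 \<and> (\<forall>x \<in> set xs. x \<in> Wseq k c lam n \<and> fst x > 1)})"

definition Wall :: "nat \<Rightarrow> (pt \<Rightarrow> real) \<Rightarrow> real \<Rightarrow> pt set" where
  "Wall k c lam = (\<Union>n. Wseq k c lam n)"

definition Wbeta :: "nat \<Rightarrow> (pt \<Rightarrow> real) \<Rightarrow> real \<Rightarrow> real \<Rightarrow> pt set" where
  "Wbeta k c lam \<beta> = {p \<in> Wall k c lam. fst p \<ge> \<beta>}"

end

theory Submission
  imports Defs Complex_Main "HOL-Library.List_Lexorder"
begin

(*
  Let shift (a, m) = (a - 1, m).  It turns the operation x1 + ... + xm - (m - 1, 0) into plain
  addition, and shift (p + q) = shift p + q = shift p + shift q + (1, 0).  Hence, by induction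
  on n, every element of W_n with first coordinate <= 1 lies in W_1, and every element p with
  first coordinate > 1 has shift p in the additive semigroup S generated by
  shift (W_1 /\ {a > 1}) u W_1 u {(1, 0)}.  These generators are lexicographically positive
  and form a well-ordered set, so S is well-ordered by Neumann's lemma, and W_beta lies in the
  translate S + (1, 0).

  For the closure property, an element of W_(n+1) lies in W_n, or its shift is a sum of shifts
  of elements of W_n with first coordinate > 1 (at least one) and of elements of W.
  Substituting these expansions reduces the operation on m >= 2 elements of W_(n+1) to the
  operation on at least m elements of W_n; on W_1 it yields a generator of W_m.  The bound
  beta is kept because m beta - (m - 1) >= beta.
*)

section \<open>Well-ordered subsets of a linear order\<close>

lemma wfp_on_iff_no_descending_chain:
  "wfp_on S R \<longleftrightarrow> (\<nexists>f. \<forall>i. f i \<in> S \<and> R (f (Suc i)) (f i))"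
proof -
  have "wfp_on S R \<longleftrightarrow> wf {(x, y). R x y \<and> x \<in> S \<and> y \<in> S}"
    by (simp only: wfp_on_iff_wfp[of S R] wfp_def)
  moreover have "(\<forall>i. R (f (Suc i)) (f i) \<and> f (Suc i) \<in> S \<and> f i \<in> S) \<longleftrightarrow>
      (\<forall>i. f i \<in> S \<and> R (f (Suc i)) (f i))" for f
    by blast
  ultimately show ?thesis by (simp add: wf_iff_no_infinite_down_chain)
qed

lemma wfp_on_less_iff_ex_least:
  fixes S :: "'a::linorder set"
  shows "wfp_on S (<) \<longleftrightarrow> (\<forall>T \<subseteq> S. T \<noteq> {} \<longrightarrow> (\<exists>t\<in>T. \<forall>u\<in>T. t \<le> u))"
proof -
  have "(\<exists>z\<in>T. \<forall>y. y < z \<longrightarrow> y \<notin> T) \<longleftrightarrow> (\<exists>t\<in>T. \<forall>u\<in>T. t \<le> u)" for T :: "'a set"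
    by (meson not_le)
  then show ?thesis unfolding wfp_on_iff_ex_minimal by simp
qed

lemma wfp_on_less_ex_least:
  fixes S :: "'a::linorder set"
  assumes "wfp_on S (<)" "T \<subseteq> S" "T \<noteq> {}"
  obtains t where "t \<in> T" "\<And>u. u \<in> T \<Longrightarrow> t \<le> u"
  using assms(1)[unfolded wfp_on_less_iff_ex_least, rule_format, OF assms(2,3)] by blast

lemma wfp_on_less_Un:
  fixes A B :: "'a::linorder set"
  assumes "wfp_on A (<)" and "wfp_on B (<)"
  shows "wfp_on (A \<union> B) (<)"
  unfolding wfp_on_less_iff_ex_least
proof (intro allI impI)
  fix T assume T: "T \<subseteq> A \<union> B" "T \<noteq> {}"
  show "\<exists>t\<in>T. \<forall>u\<in>T. t \<le> u"
  proof (cases "T \<inter> A = {} \<or> T \<inter> B = {}")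
    case True
    then have "T \<subseteq> A \<or> T \<subseteq> B" using T(1) by blast
    then obtain t where "t \<in> T" "\<And>u. u \<in> T \<Longrightarrow> t \<le> u"
      using wfp_on_less_ex_least assms T(2) by metis
    then show ?thesis by blast
  next
    case False
    obtain a where a: "a \<in> T" "\<And>u. u \<in> T \<inter> A \<Longrightarrow> a \<le> u"
      using wfp_on_less_ex_least[OF assms(1), of "T \<inter> A"] False by blast
    obtain b where b: "b \<in> T" "\<And>u. u \<in> T \<inter> B \<Longrightarrow> b \<le> u"
      using wfp_on_less_ex_least[OF assms(2), of "T \<inter> B"] False by blast
    have "min a b \<le> u" if "u \<in> T" for u
    proof (cases "u \<in> A")
      case True
      then show ?thesis using that a(2) by (simp add: min.coboundedI1)
    next
      case False
      then have "u \<in> B" using that T(1) by blast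
      then show ?thesis using that b(2) by (simp add: min.coboundedI2)
    qed
    moreover have "min a b \<in> T" using a(1) b(1) by (simp add: min_def)
    ultimately have "min a b \<in> T" "\<forall>u\<in>T. min a b \<le> u" by blast+
    then show ?thesis by blast
  qed
qed

lemma wfp_on_less_finite: "finite (S :: 'a::linorder set) \<Longrightarrow> wfp_on S (<)"
  by (rule strict_partial_order_wfp_on_finite_set) (auto intro: transp_onI)

lemma wfp_on_less_UN:
  fixes F :: "'i \<Rightarrow> 'a::linorder set"
  shows "finite I \<Longrightarrow> (\<And>i. i \<in> I \<Longrightarrow> wfp_on (F i) (<)) \<Longrightarrow> wfp_on (\<Union>i\<in>I. F i) (<)"
  by (induction I rule: finite_induct) (auto intro: wfp_on_less_Un wfp_on_less_finite)

lemma descending_chain_less: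
  fixes f :: "nat \<Rightarrow> 'a::order"
  assumes "\<And>i. f (Suc i) < f i" and "i < j"
  shows "f j < f i"
  using assms(2) by (induction j) (auto simp: less_Suc_eq intro: order.strict_trans assms(1))

lemma wfp_on_less_incseq_subseq:
  fixes f :: "nat \<Rightarrow> 'a::linorder"
  assumes wo: "wfp_on S (<)" and f: "range f \<subseteq> S"
  shows "\<exists>g. strict_mono g \<and> incseq (f \<circ> g)"
proof -
  obtain g where g: "strict_mono g" "monoseq (\<lambda>n. f (g n))" using seq_monosub by blast
  show ?thesis
  proof (cases "incseq (f \<circ> g)")
    case False
    then have dec: "decseq (f \<circ> g)" using g(2) by (simp add: monoseq_iff o_def)
    have "range (f \<circ> g) \<subseteq> S" "range (f \<circ> g) \<noteq> {}" using f by auto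
    then obtain t where t: "t \<in> range (f \<circ> g)" "\<And>u. u \<in> range (f \<circ> g) \<Longrightarrow> t \<le> u"
      using wfp_on_less_ex_least[OF wo] by blast
    then obtain N where N: "\<forall>i. f (g N) \<le> f (g i)" by auto
    have "f (g (N + i)) = f (g N)" for i
      using N dec by (metis antisym decseqD le_add1 o_apply)
    then have "incseq (f \<circ> (\<lambda>i. g (N + i)))" by (simp add: incseq_def)
    moreover have "strict_mono (\<lambda>i. g (N + i))" using g(1) by (simp add: strict_mono_def)
    ultimately show ?thesis by blast
  qed (use g in blast)
qed

section \<open>Neumann's lemma for lexicographically ordered real vectors\<close>

definition vadd :: "real list \<Rightarrow> real list \<Rightarrow> real list" where
  "vadd = map2 (+)"

lemma vadd_Cons [simp]: "vadd (a # x) (b # y) = (a + b) # vadd x y"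
  and vadd_Nil [simp]: "vadd [] y = []" "vadd x [] = []"
  and length_vadd [simp]: "length (vadd x y) = min (length x) (length y)"
  by (simp_all add: vadd_def)

lemma vadd_commute: "vadd x y = vadd y x"
  by (simp add: vadd_def zip_commute[of y] add.commute case_prod_unfold)

lemma vadd_assoc: "vadd (vadd x y) z = vadd x (vadd y z)"
proof (induction x arbitrary: y z)
  case (Cons a x)
  then show ?case by (cases y; cases z) auto
qed simp

lemma vadd_left_commute: "vadd x (vadd y z) = vadd y (vadd x z)"
  by (metis vadd_assoc vadd_commute)

lemma vadd_replicate_zero [simp]:
  "length x = n \<Longrightarrow> vadd x (replicate n 0) = x"
  "length x = n \<Longrightarrow> vadd (replicate n 0) x = x"
  by (induction x arbitrary: n) auto

lemma vadd_strict_mono_left: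
  "x < y \<Longrightarrow> length x = length z \<Longrightarrow> length y = length z \<Longrightarrow> vadd x z < vadd y z"
proof (induction x arbitrary: y z)
  case (Cons a x)
  then show ?case by (cases y; cases z) auto
qed simp

lemma vadd_mono:
  assumes "x \<le> y" "u \<le> v" and "length x = n" "length y = n" "length u = n" "length v = n"
  shows "vadd x u \<le> vadd y v"
proof -
  have "vadd x u \<le> vadd y u" using assms vadd_strict_mono_left[of x y u] by (cases "x = y") (auto simp: order.strict_iff_order)
  also have "\<dots> \<le> vadd y v" using assms vadd_strict_mono_left[of u v y] by (cases "u = v") (auto simp: vadd_commute order.strict_iff_order)
  finally show ?thesis .
qed

lemma hd_le_hd: "x \<le> y \<Longrightarrow> x \<noteq> [] \<Longrightarrow> y \<noteq> [] \<Longrightarrow> hd x \<le> (hd y :: real)"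
  by (auto simp: neq_Nil_conv)

definition vset_add :: "real list set \<Rightarrow> real list set \<Rightarrow> real list set" where
  "vset_add A B = {vadd a b | a b. a \<in> A \<and> b \<in> B}"

lemma vset_addI: "a \<in> A \<Longrightarrow> b \<in> B \<Longrightarrow> vadd a b \<in> vset_add A B"
  by (auto simp: vset_add_def)

lemma vset_addE:
  assumes "x \<in> vset_add A B"
  obtains a b where "a \<in> A" "b \<in> B" "x = vadd a b"
  using assms by (auto simp: vset_add_def)

lemma vset_add_length:
  "A \<subseteq> {x. length x = n} \<Longrightarrow> B \<subseteq> {x. length x = n} \<Longrightarrow> vset_add A B \<subseteq> {x. length x = n}"
  by (fastforce simp: vset_add_def)

lemma wfp_on_vset_add:
  assumes A: "wfp_on A (<)" "A \<subseteq> {x. length x = n}" and B: "wfp_on B (<)" "B \<subseteq> {x. length x = n}"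
  shows "wfp_on (vset_add A B) (<)"
  unfolding wfp_on_iff_no_descending_chain
proof
  assume "\<exists>h. \<forall>i. h i \<in> vset_add A B \<and> h (Suc i) < h i"
  then obtain h where h: "\<And>i. h i \<in> vset_add A B" "\<And>i. h (Suc i) < h i" by blast
  have "\<forall>i. \<exists>a b. a \<in> A \<and> b \<in> B \<and> h i = vadd a b" using h(1) unfolding vset_add_def by blast
  then obtain a b where ab: "\<And>i. a i \<in> A" "\<And>i. b i \<in> B" "\<And>i. h i = vadd (a i) (b i)"
    by metis
  obtain g where g: "strict_mono g" "incseq (a \<circ> g)"
    using wfp_on_less_incseq_subseq[OF A(1)] ab(1) by blast
  have "b (g (Suc i)) < b (g i)" for i
  proof (rule ccontr)
    assume "\<not> b (g (Suc i)) < b (g i)"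
    then have "vadd (a (g i)) (b (g i)) \<le> vadd (a (g (Suc i))) (b (g (Suc i)))"
      using incseq_SucD[OF g(2), of i] ab A(2) B(2) by (intro vadd_mono[where n = n]) (auto simp: subset_iff)
    moreover have "h (g (Suc i)) < h (g i)"
      using descending_chain_less[of h, OF h(2)] g(1) by (simp add: strict_mono_def)
    ultimately show False using ab(3) by (metis leD)
  qed
  then have "\<exists>f. \<forall>i. f i \<in> B \<and> f (Suc i) < f i"
    using ab(2) by (intro exI[of _ "b \<circ> g"]) simp
  then show False using B(1) unfolding wfp_on_iff_no_descending_chain by blast
qed

lemma wfp_on_funpow_vset_add:
  assumes "wfp_on A (<)" "A \<subseteq> {x. length x = n}" "wfp_on Z (<)" "Z \<subseteq> {x. length x = n}"
  shows "wfp_on ((vset_add A ^^ j) Z) (<) \<and> (vset_add A ^^ j) Z \<subseteq> {x. length x = n}"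
  by (induction j) (use assms wfp_on_vset_add vset_add_length in auto)

lemma vadd_mem_funpow_vset_add:
  assumes Z: "\<And>x y. x \<in> Z \<Longrightarrow> y \<in> Z \<Longrightarrow> vadd x y \<in> Z"
    and x: "x \<in> (vset_add A ^^ i) Z" and y: "y \<in> (vset_add A ^^ j) Z"
  shows "vadd x y \<in> (vset_add A ^^ (i + j)) Z"
  using x
proof (induction i arbitrary: x)
  case 0
  show ?case using y
  proof (induction j arbitrary: y)
    case (Suc j)
    then obtain a y' where "a \<in> A" "y' \<in> (vset_add A ^^ j) Z" "y = vadd a y'"
      by (auto elim: vset_addE)
    then show ?case using Suc.IH by (auto simp: vadd_left_commute intro: vset_addI)
  qed (use 0 Z in simp)
next
  case (Suc i)
  then obtain a x' where "a \<in> A" "x' \<in> (vset_add A ^^ i) Z" "x = vadd a x'"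
    by (auto elim: vset_addE)
  then show ?case using Suc.IH by (auto simp: vadd_assoc intro: vset_addI)
qed

lemma hd_ge_if_mem_funpow_vset_add:
  assumes "\<And>a. a \<in> A \<Longrightarrow> a \<noteq> [] \<and> d \<le> hd a" and "\<And>z. z \<in> Z \<Longrightarrow> z \<noteq> [] \<and> 0 \<le> hd z"
  shows "x \<in> (vset_add A ^^ j) Z \<Longrightarrow> x \<noteq> [] \<and> real j * d \<le> hd x"
proof (induction j arbitrary: x)
  case (Suc j)
  then obtain a y where "a \<in> A" "y \<in> (vset_add A ^^ j) Z" "x = vadd a y"
    by (auto elim: vset_addE)
  then show ?case using Suc.IH[of y] assms(1)[of a] by (auto simp: neq_Nil_conv algebra_simps)
qed (use assms(2) in simp)

inductive_set vsemigroup_gen :: "real list set \<Rightarrow> real list set" for X where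
  gen: "x \<in> X \<Longrightarrow> x \<in> vsemigroup_gen X"
| add: "x \<in> vsemigroup_gen X \<Longrightarrow> y \<in> vsemigroup_gen X \<Longrightarrow> vadd x y \<in> vsemigroup_gen X"

lemma vsemigroup_gen_length: "X \<subseteq> {x. length x = n} \<Longrightarrow> vsemigroup_gen X \<subseteq> {x. length x = n}"
proof
  show "x \<in> vsemigroup_gen X \<Longrightarrow> X \<subseteq> {x. length x = n} \<Longrightarrow> x \<in> {x. length x = n}" for x
    by (induction rule: vsemigroup_gen.induct) auto
qed

lemma vsemigroup_gen_subset_UN_funpow:
  assumes "X \<subseteq> A \<union> Z" "replicate n 0 \<in> Z" "A \<subseteq> {x. length x = n}"
    and "\<And>x y. x \<in> Z \<Longrightarrow> y \<in> Z \<Longrightarrow> vadd x y \<in> Z"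
  shows "vsemigroup_gen X \<subseteq> (\<Union>j. (vset_add A ^^ j) Z)"
proof
  fix x assume "x \<in> vsemigroup_gen X"
  then show "x \<in> (\<Union>j. (vset_add A ^^ j) Z)"
  proof (induction rule: vsemigroup_gen.induct)
    case (gen x)
    show ?case
    proof (cases "x \<in> A")
      case True
      then have "vadd x (replicate n 0) \<in> (vset_add A ^^ 1) Z"
        using assms(2) by (auto intro: vset_addI)
      then have "x \<in> (vset_add A ^^ 1) Z" using True assms(3) by auto
      then show ?thesis by blast
    next
      case False
      then have "x \<in> (vset_add A ^^ 0) Z" using gen assms(1) by auto
      then show ?thesis by blast
    qed
  next
    case (add x y)
    then obtain i j where "x \<in> (vset_add A ^^ i) Z" "y \<in> (vset_add A ^^ j) Z" by blast
    then have "vadd x y \<in> (vset_add A ^^ (i + j)) Z" using vadd_mem_funpow_vset_add[OF assms(4)] by blast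
    then show ?case by blast
  qed
qed

lemma vadd_pos:
  assumes "replicate n 0 < x" "replicate n 0 < y" "length x = n" "length y = n"
  shows "replicate n 0 < vadd x y"
proof -
  have "y < vadd x y" using vadd_strict_mono_left[OF assms(1)] assms(2-4) by simp
  then show ?thesis using assms(2) by order
qed

lemma hd_lower_bound:
  assumes wo: "wfp_on A (<)" and pos: "\<And>a. a \<in> A \<Longrightarrow> a \<noteq> [] \<and> 0 < hd a"
  obtains d :: real where "0 < d" "\<And>a. a \<in> A \<Longrightarrow> d \<le> hd a"
proof (cases "A = {}")
  case False
  then obtain a0 where a0: "a0 \<in> A" "\<And>a. a \<in> A \<Longrightarrow> a0 \<le> a"
    using wfp_on_less_ex_least[OF wo] by blast
  have "hd a0 \<le> hd a" if "a \<in> A" for a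
    using a0 that pos by (intro hd_le_hd) auto
  then show ?thesis using that[of "hd a0"] a0(1) pos by blast
qed (use that[of 1] in simp)

lemma wfp_on_if_hd_layers:
  fixes P :: "nat \<Rightarrow> real list set"
  assumes "0 < d" and S: "S \<subseteq> (\<Union>j. P j)" and nonempty: "\<And>x. x \<in> S \<Longrightarrow> x \<noteq> []"
    and wo: "\<And>j. wfp_on (P j) (<)" and hd: "\<And>j x. x \<in> P j \<Longrightarrow> real j * d \<le> hd x"
  shows "wfp_on S (<)"
  unfolding wfp_on_iff_no_descending_chain
proof
  assume "\<exists>f. \<forall>i. f i \<in> S \<and> f (Suc i) < f i"
  then obtain f where f: "\<And>i. f i \<in> S" "\<And>i. f (Suc i) < f i" by blast
  define N where "N = nat \<lceil>hd (f 0) / d\<rceil>"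
  have "f i \<in> (\<Union>j\<in>{..N}. P j)" for i
  proof -
    from subsetD[OF S f(1)] obtain j where j: "f i \<in> P j" by (rule UN_E)
    have "f i \<le> f 0"
    proof (cases "i = 0")
      case False
      have "f i < f 0" by (rule descending_chain_less[of f, OF f(2)]) (use False in simp)
      then show ?thesis by (rule less_imp_le)
    qed simp
    then have "hd (f i) \<le> hd (f 0)" by (intro hd_le_hd nonempty f(1))
    with hd[OF j] have "real j \<le> hd (f 0) / d" using \<open>0 < d\<close> by (simp add: field_simps)
    then have "j \<le> N" unfolding N_def by (meson order.trans real_nat_ceiling_ge of_nat_le_iff)
    then show ?thesis using j by blast
  qed
  moreover have "wfp_on (\<Union>j\<in>{..N}. P j) (<)" by (rule wfp_on_less_UN) (auto intro: wo)
  ultimately show False using f(2) unfolding wfp_on_iff_no_descending_chain by blast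
qed

lemma vsemigroup_gen_empty: "vsemigroup_gen {} = {}"
proof -
  have "x \<notin> vsemigroup_gen {}" for x
  proof
    show "x \<in> vsemigroup_gen {} \<Longrightarrow> False" by (induction rule: vsemigroup_gen.induct) auto
  qed
  then show ?thesis by blast
qed

(* Generators with first coordinate 0 form, after dropping that
   coordinate, a positive well-ordered set of lower dimension; the others have first
   coordinate >= d > 0, so an element with first coordinate <= r is a sum of at most r / d of
   them and an element of the lower-dimensional semigroup. *)
theorem wfp_on_vsemigroup_gen:
  assumes "X \<subseteq> {x. length x = n \<and> replicate n 0 < x}" and "wfp_on X (<)"
  shows "wfp_on (vsemigroup_gen X) (<)"
  using assms
proof (induction n arbitrary: X)
  case 0
  then have "X = {}" by auto
  then show ?case by (simp add: vsemigroup_gen_empty wfp_on_less_finite)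
next
  case (Suc m)
  define X0 where "X0 = {t. 0 # t \<in> X}"
  define Xp where "Xp = {x \<in> X. 0 < hd x}"
  define Z where "Z = insert (replicate (Suc m) 0) ((#) 0 ` vsemigroup_gen X0)"
  have X0: "X0 \<subseteq> {x. length x = m \<and> replicate m 0 < x}"
    using Suc.prems(1) by (auto simp: X0_def)
  have "wfp_on ((#) 0 ` X0) (<)"
    using Suc.prems(2) by (rule wfp_on_subset) (auto simp: X0_def)
  then have "wfp_on (vsemigroup_gen X0) (<)"
    using Suc.IH[OF X0] by (simp add: wfp_on_image)
  then have "wfp_on ((#) 0 ` vsemigroup_gen X0) (<)" by (simp add: wfp_on_image)
  then have Z_wo: "wfp_on Z (<)"
    using wfp_on_less_Un[OF wfp_on_less_finite] unfolding Z_def by (metis finite.intros insert_is_Un)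
  have vsemigroup_gen_X0_length: "vsemigroup_gen X0 \<subseteq> {x. length x = m}" using X0 vsemigroup_gen_length[of X0 m] by auto
  then have Z_length: "Z \<subseteq> {x. length x = Suc m}" by (auto simp: Z_def)
  have Z_add: "vadd x y \<in> Z" if "x \<in> Z" "y \<in> Z" for x y
    using that vsemigroup_gen_X0_length by (auto simp: Z_def intro: vsemigroup_gen.add)
  have X_split: "X \<subseteq> Xp \<union> Z"
  proof
    fix x assume x: "x \<in> X"
    then obtain h t where "x = h # t" "0 < h \<or> h = 0 \<and> replicate m 0 < t"
      using Suc.prems(1) by (auto simp: length_Suc_conv)
    then show "x \<in> Xp \<union> Z" using x by (auto simp: Xp_def Z_def X0_def intro: vsemigroup_gen.gen)
  qed
  have Xp_wo: "wfp_on Xp (<)" using Suc.prems(2) by (rule wfp_on_subset) (auto simp: Xp_def)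
  have Xp_length: "Xp \<subseteq> {x. length x = Suc m}" using Suc.prems(1) by (auto simp: Xp_def)
  have "a \<noteq> [] \<and> 0 < hd a" if "a \<in> Xp" for a using that Xp_length by (auto simp: Xp_def)
  then obtain d where d: "0 < d" "\<And>a. a \<in> Xp \<Longrightarrow> d \<le> hd a"
    using hd_lower_bound[OF Xp_wo] by blast
  define P where "P j = (vset_add Xp ^^ j) Z" for j
  show ?case
  proof (rule wfp_on_if_hd_layers[OF d(1)])
    show "vsemigroup_gen X \<subseteq> (\<Union>j. P j)"
      unfolding P_def using X_split Xp_length Z_add
      by (intro vsemigroup_gen_subset_UN_funpow[where n = "Suc m"]) (auto simp: Z_def)
    show "x \<noteq> []" if "x \<in> vsemigroup_gen X" for x
      using that vsemigroup_gen_length[of X "Suc m"] Suc.prems(1) by fastforce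
    show "wfp_on (P j) (<)" for j
      using wfp_on_funpow_vset_add[OF Xp_wo Xp_length Z_wo Z_length] by (simp add: P_def)
    show "real j * d \<le> hd x" if "x \<in> P j" for x j
      using hd_ge_if_mem_funpow_vset_add[of Xp d Z x j] that d Xp_length Z_length
      by (fastforce simp: P_def Z_def)
  qed
qed

section \<open>Well-ordered sets of points\<close>

definition pt_vec :: "pt \<Rightarrow> real list" where
  "pt_vec p = fst p # map real_of_int (snd p)"

lemma length_pt_vec [simp]: "length (pt_vec p) = Suc (length (snd p))"
  by (simp add: pt_vec_def)

lemma pt_vec_inject: "pt_vec p = pt_vec q \<longleftrightarrow> p = q"
  by (auto simp: pt_vec_def prod_eq_iff inj_map_eq_map inj_on_def)

lemma pt_vec_padd: "pt_vec (padd p q) = vadd (pt_vec p) (pt_vec q)"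
proof -
  have "map real_of_int (map2 (+) v w) = vadd (map real_of_int v) (map real_of_int w)" for v w
  proof (induction v arbitrary: w)
    case (Cons a v)
    then show ?case by (cases w) auto
  qed simp
  then show ?thesis by (simp add: pt_vec_def padd_def)
qed

lemma pt_vec_zero: "pt_vec (0, zvec k) = replicate (Suc k) 0"
  by (simp add: pt_vec_def zvec_def)

lemma vlex_less_Cons: "vlex_less (a # v) (b # w) \<longleftrightarrow> a < b \<or> a = b \<and> vlex_less v w"
proof
  assume "vlex_less (a # v) (b # w)"
  then obtain i where "i < Suc (length v)" "take i (a # v) = take i (b # w)" "(a # v) ! i < (b # w) ! i"
    by (auto simp: vlex_less_def)
  then show "a < b \<or> a = b \<and> vlex_less v w"
    by (cases i) (auto simp: vlex_less_def)
next
  assume "a < b \<or> a = b \<and> vlex_less v w"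
  then show "vlex_less (a # v) (b # w)"
  proof
    assume "a < b"
    then show ?thesis unfolding vlex_less_def by (intro exI[of _ 0]) auto
  next
    assume "a = b \<and> vlex_less v w"
    then obtain j where "j < length v" "take j v = take j w" "v ! j < w ! j" "a = b"
      by (auto simp: vlex_less_def)
    then show ?thesis unfolding vlex_less_def by (intro exI[of _ "Suc j"]) auto
  qed
qed

lemma vlex_less_iff_less:
  "length v = length w \<Longrightarrow> vlex_less v w \<longleftrightarrow> map real_of_int v < map real_of_int w"
proof (induction v arbitrary: w)
  case Nil
  then show ?case by (simp add: vlex_less_def)
next
  case (Cons a v)
  then show ?case by (cases w) (auto simp: vlex_less_Cons)
qed

lemma lex_less_iff_pt_vec_less:
  "length (snd p) = length (snd q) \<Longrightarrow> lex_less p q \<longleftrightarrow> pt_vec p < pt_vec q"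
  by (auto simp: lex_less_def pt_vec_def vlex_less_iff_less)

lemma lex_le_iff_pt_vec_le:
  "length (snd p) = length (snd q) \<Longrightarrow> lex_le p q \<longleftrightarrow> pt_vec p \<le> pt_vec q"
  by (auto simp: lex_le_def lex_less_iff_pt_vec_less order.order_iff_strict pt_vec_inject)

lemma lex_wellordered_iff_wfp_on:
  assumes "S \<subseteq> {p. length (snd p) = k}"
  shows "lex_wellordered S \<longleftrightarrow> wfp_on (pt_vec ` S) (<)"
proof -
  have "(\<exists>t\<in>T. \<forall>u\<in>T. lex_le t u) \<longleftrightarrow> (\<exists>t\<in>pt_vec ` T. \<forall>u\<in>pt_vec ` T. t \<le> u)"
    if "T \<subseteq> S" for T
  proof -
    have "\<forall>t\<in>T. \<forall>u\<in>T. lex_le t u \<longleftrightarrow> pt_vec t \<le> pt_vec u"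
    proof (intro ballI)
      fix t u assume "t \<in> T" "u \<in> T"
      then have "length (snd t) = length (snd u)" using that assms by auto
      then show "lex_le t u \<longleftrightarrow> pt_vec t \<le> pt_vec u" by (rule lex_le_iff_pt_vec_le)
    qed
    then show ?thesis by auto
  qed
  then show ?thesis
    unfolding lex_wellordered_def wfp_on_less_iff_ex_least all_subset_image by auto
qed

definition positive_cone :: "nat \<Rightarrow> pt set" where
  "positive_cone k = {p. length (snd p) = k \<and> lex_less (0, zvec k) p}"

lemma positive_cone_iff:
  "p \<in> positive_cone k \<longleftrightarrow> length (snd p) = k \<and> replicate (Suc k) 0 < pt_vec p"
proof -
  have "length (zvec k) = k" by (simp add: zvec_def)
  then show ?thesis
    using lex_less_iff_pt_vec_less[of "(0, zvec k)" p] by (auto simp: positive_cone_def pt_vec_zero)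
qed

lemma fst_nonneg_if_positive_cone: "p \<in> positive_cone k \<Longrightarrow> 0 \<le> fst p"
  by (auto simp: positive_cone_def lex_less_def)

lemma lex_wellordered_subset: "lex_wellordered S \<Longrightarrow> T \<subseteq> S \<Longrightarrow> lex_wellordered T"
  unfolding lex_wellordered_def by (meson order_trans)

lemma lex_wellordered_image:
  assumes wo: "lex_wellordered S" and mono: "\<And>p q. p \<in> S \<Longrightarrow> q \<in> S \<Longrightarrow> lex_le p q \<Longrightarrow> lex_le (f p) (f q)"
  shows "lex_wellordered (f ` S)"
  unfolding lex_wellordered_def
proof (intro allI impI)
  fix T assume T: "T \<subseteq> f ` S" "T \<noteq> {}"
  then have "{p \<in> S. f p \<in> T} \<subseteq> S" "{p \<in> S. f p \<in> T} \<noteq> {}" by blast+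
  from wo[unfolded lex_wellordered_def, rule_format, OF this]
  obtain t where t: "t \<in> S" "f t \<in> T" "\<And>u. u \<in> S \<Longrightarrow> f u \<in> T \<Longrightarrow> lex_le t u"
    by blast
  have "lex_le (f t) u" if "u \<in> T" for u
    using that T(1) t mono by blast
  then show "\<exists>t\<in>T. \<forall>u\<in>T. lex_le t u" using t(2) by blast
qed

lemma fst_le_if_lex_le: "lex_le p q \<Longrightarrow> fst p \<le> fst q"
  by (auto simp: lex_le_def lex_less_def)

lemma lex_le_add_fst: "lex_le (fst p + r, snd p) (fst q + r, snd q) \<longleftrightarrow> lex_le p q"
  by (auto simp: lex_le_def lex_less_def prod_eq_iff)

lemma lex_wellordered_add_fst:
  "lex_wellordered S \<Longrightarrow> lex_wellordered ((\<lambda>p. (fst p + r, snd p)) ` S)"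
  by (rule lex_wellordered_image) (simp_all add: lex_le_add_fst)

lemma lex_wellordered_Un:
  assumes "lex_wellordered A" "lex_wellordered B" "A \<union> B \<subseteq> {p. length (snd p) = k}"
  shows "lex_wellordered (A \<union> B)"
proof -
  have "A \<subseteq> {p. length (snd p) = k}" "B \<subseteq> {p. length (snd p) = k}" using assms(3) by auto
  then show ?thesis
    using assms by (simp add: lex_wellordered_iff_wfp_on[of _ k] image_Un wfp_on_less_Un)
qed

lemma lex_wellordered_finite:
  "finite S \<Longrightarrow> S \<subseteq> {p. length (snd p) = k} \<Longrightarrow> lex_wellordered S"
  by (simp add: lex_wellordered_iff_wfp_on wfp_on_less_finite)

lemma padd_positive_cone:
  "p \<in> positive_cone k \<Longrightarrow> q \<in> positive_cone k \<Longrightarrow> padd p q \<in> positive_cone k"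
proof -
  assume p: "p \<in> positive_cone k" and q: "q \<in> positive_cone k"
  then have "length (snd (padd p q)) = k" by (simp add: positive_cone_def padd_def)
  moreover have "replicate (Suc k) 0 < vadd (pt_vec p) (pt_vec q)"
    using p q by (intro vadd_pos) (auto simp: positive_cone_iff)
  ultimately show ?thesis by (simp add: positive_cone_iff pt_vec_padd)
qed

lemma semigroup_gen_positive_cone:
  assumes "G \<subseteq> positive_cone k"
  shows "semigroup_gen G \<subseteq> positive_cone k"
proof
  show "p \<in> semigroup_gen G \<Longrightarrow> p \<in> positive_cone k" for p
    by (induction rule: semigroup_gen.induct) (use assms padd_positive_cone in auto)
qed

theorem lex_wellordered_semigroup_gen:
  assumes pos: "G \<subseteq> positive_cone k" and wo: "lex_wellordered G"
  shows "lex_wellordered (semigroup_gen G)"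
proof -
  have len: "G \<subseteq> {p. length (snd p) = k}" "semigroup_gen G \<subseteq> {p. length (snd p) = k}"
    using pos semigroup_gen_positive_cone[OF pos] by (auto simp: positive_cone_def)
  have "pt_vec ` G \<subseteq> {x. length x = Suc k \<and> replicate (Suc k) 0 < x}"
    using pos by (auto simp: positive_cone_iff)
  moreover have "wfp_on (pt_vec ` G) (<)" using wo len(1) by (simp add: lex_wellordered_iff_wfp_on)
  ultimately have "wfp_on (vsemigroup_gen (pt_vec ` G)) (<)" by (rule wfp_on_vsemigroup_gen)
  moreover have "pt_vec ` semigroup_gen G \<subseteq> vsemigroup_gen (pt_vec ` G)"
  proof
    fix v assume "v \<in> pt_vec ` semigroup_gen G"
    then obtain p where p: "p \<in> semigroup_gen G" "v = pt_vec p" by blast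
    have "pt_vec p \<in> vsemigroup_gen (pt_vec ` G)" using p(1)
      by (induction rule: semigroup_gen.induct) (auto simp: pt_vec_padd intro: vsemigroup_gen.intros)
    then show "v \<in> vsemigroup_gen (pt_vec ` G)" using p(2) by simp
  qed
  ultimately show ?thesis using len(2) by (simp add: lex_wellordered_iff_wfp_on wfp_on_subset)
qed

section \<open>Sums of points and the shift\<close>

lemma fst_padd [simp]: "fst (padd p q) = fst p + fst q"
  and length_snd_padd [simp]: "length (snd (padd p q)) = min (length (snd p)) (length (snd q))"
  by (simp_all add: padd_def)

lemma padd_commute: "padd p q = padd q p"
  by (simp add: padd_def zip_commute[of "snd q"] add.commute case_prod_unfold)

lemma padd_assoc: "padd (padd p q) r = padd p (padd q r)"
proof -
  have "map2 (+) (map2 (+) u v) w = map2 (+) u (map2 (+) v w)" for u v w :: "int list"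
  proof (induction u arbitrary: v w)
    case (Cons a u)
    then show ?case by (cases v; cases w) auto
  qed simp
  then show ?thesis by (simp add: padd_def)
qed

lemma padd_left_commute: "padd p (padd q r) = padd q (padd p r)"
  by (metis padd_assoc padd_commute)

lemmas padd_ac = padd_assoc padd_commute padd_left_commute

lemma padd_zero [simp]:
  "length (snd p) = k \<Longrightarrow> padd p (0, zvec k) = p"
  "length (snd p) = k \<Longrightarrow> padd (0, zvec k) p = p"
  by (induction "snd p" arbitrary: p k) (auto simp: padd_def zvec_def prod_eq_iff)

lemma psum_Nil [simp]: "psum k [] = (0, zvec k)"
  and psum_Cons [simp]: "psum k (x # xs) = padd x (psum k xs)"
  by (simp_all add: psum_def)

lemma length_snd_psum:
  "\<forall>x\<in>set xs. length (snd x) = k \<Longrightarrow> length (snd (psum k xs)) = k"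
  by (induction xs) (auto simp: zvec_def)

lemma fst_psum: "fst (psum k xs) = (\<Sum>x\<leftarrow>xs. fst x)"
  by (induction xs) simp_all

lemma psum_append:
  assumes "\<forall>y\<in>set ys. length (snd y) = k"
  shows "psum k (xs @ ys) = padd (psum k xs) (psum k ys)"
  by (induction xs) (simp_all add: assms length_snd_psum padd_assoc)

lemma psum_mem_if_padd_closed:
  assumes closed: "\<And>x y. x \<in> A \<Longrightarrow> y \<in> A \<Longrightarrow> padd x y \<in> A"
    and len: "\<forall>x\<in>A. length (snd x) = k"
  shows "xs \<noteq> [] \<Longrightarrow> set xs \<subseteq> A \<Longrightarrow> psum k xs \<in> A"
proof (induction xs)
  case (Cons x xs)
  then show ?case using closed len by (cases "xs = []") auto
qed simp

definition shift :: "pt \<Rightarrow> pt" where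
  "shift p = (fst p - 1, snd p)"

lemma fst_shift [simp]: "fst (shift p) = fst p - 1"
  and snd_shift [simp]: "snd (shift p) = snd p"
  by (simp_all add: shift_def)

lemma shift_inject: "shift p = shift q \<longleftrightarrow> p = q"
  by (simp add: shift_def prod_eq_iff)

lemma shift_padd: "shift (padd p q) = padd (shift p) q"
  by (simp add: shift_def padd_def)

lemma padd_shift_one: "length (snd p) = k \<Longrightarrow> padd (shift p) (1, zvec k) = p"
  using padd_zero(1)[of p k] by (simp add: padd_def shift_def)

lemma psum_map_shift: "psum k (map shift xs) = (fst (psum k xs) - real (length xs), snd (psum k xs))"
  by (induction xs) (auto simp: padd_def)

definition oplus :: "nat \<Rightarrow> pt list \<Rightarrow> pt" where
  "oplus k xs = psub (psum k xs) (real (length xs - 1), zvec k)"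

lemma psub_zvec: "length (snd p) = k \<Longrightarrow> psub p (r, zvec k) = (fst p - r, snd p)"
  by (induction "snd p" arbitrary: p k) (auto simp: psub_def zvec_def prod_eq_iff)

lemma real_length_minus_one: "xs \<noteq> [] \<Longrightarrow> real (length xs - 1) = real (length xs) - 1"
  by (cases xs) auto

lemma fst_oplus: "fst (oplus k xs) = (\<Sum>x\<leftarrow>xs. fst x) - real (length xs - 1)"
  by (simp add: oplus_def psub_def fst_psum)

lemma length_snd_oplus:
  "\<forall>x\<in>set xs. length (snd x) = k \<Longrightarrow> length (snd (oplus k xs)) = k"
  by (simp add: oplus_def psub_zvec length_snd_psum)

lemma shift_oplus:
  assumes "xs \<noteq> []" and "\<forall>x\<in>set xs. length (snd x) = k"
  shows "shift (oplus k xs) = psum k (map shift xs)"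
  using assms real_length_minus_one[OF assms(1)]
  by (simp add: oplus_def psub_zvec length_snd_psum psum_map_shift shift_def)

section \<open>The sets \<open>W\<^sub>n\<close>\<close>

locale W_construction =
  fixes k :: nat and c :: "pt \<Rightarrow> real" and lam :: real
  assumes in_Lk: "in_Lk k c" and leading: "leading_lambda_z k c lam"
begin

abbreviation W :: "nat \<Rightarrow> pt set" where
  "W \<equiv> Wseq k c lam"

lemma Wseq_Suc:
  "W (Suc n) = semigroup_gen (W n \<union> oplus k ` {xs. length xs = n + 2 \<and> (\<forall>x\<in>set xs. x \<in> W n \<and> 1 < fst x)})"
proof -
  have "{psub (psum k xs) (real (n + 1), zvec k) | xs. length xs = n + 2 \<and> (\<forall>x\<in>set xs. x \<in> W n \<and> 1 < fst x)}
      = oplus k ` {xs. length xs = n + 2 \<and> (\<forall>x\<in>set xs. x \<in> W n \<and> 1 < fst x)}"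
    by (auto simp: oplus_def)
  then show ?thesis by simp
qed

lemma supp_bound: "p \<in> supp c \<Longrightarrow> length (snd p) = k \<and> lex_le (1, zvec k) p"
  using in_Lk leading by (auto simp: in_Lk_def leading_lambda_z_def)

lemma supp_minus_lin: "supp (minus_lin k c lam) \<subseteq> supp c - {(1, zvec k)}"
  using leading by (auto simp: supp_def minus_lin_def leading_lambda_z_def)

lemma W1_gens_subset: "W1_gens k c lam \<subseteq> supp c \<union> shift ` supp c \<union> {unitvec k i | i. i < k}"
  using supp_minus_lin by (force simp: W1_gens_def shift_def)

lemma W1_gens_positive_cone: "W1_gens k c lam \<subseteq> positive_cone k"
proof
  fix g assume "g \<in> W1_gens k c lam"
  then consider "g \<in> supp c" | p where "p \<in> supp c" "p \<noteq> (1, zvec k)" "g = shift p"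
    | i where "i < k" "g = unitvec k i"
    using supp_minus_lin by (force simp: W1_gens_def shift_def)
  then show "g \<in> positive_cone k"
  proof cases
    case 1
    then have "length (snd g) = k" "1 \<le> fst g"
      using supp_bound[of g] fst_le_if_lex_le by fastforce+
    then show ?thesis by (simp add: positive_cone_def lex_less_def)
  next
    case 2
    then show ?thesis using supp_bound[of p] by (auto simp: positive_cone_def lex_le_def lex_less_def)
  next
    case 3
    then have "vlex_less (zvec k) ((replicate k 0)[i := 1])"
      unfolding vlex_less_def zvec_def by (intro exI[of _ i]) auto
    then show ?thesis using 3 by (simp add: positive_cone_def unitvec_def lex_less_def zvec_def)
  qed
qed

lemma lex_wellordered_W1_gens: "lex_wellordered (W1_gens k c lam)"
proof -
  have len: "supp c \<union> shift ` supp c \<union> {unitvec k i | i. i < k} \<subseteq> {p. length (snd p) = k}"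
    using supp_bound by (auto simp: unitvec_def)
  have wo_supp: "lex_wellordered (supp c)" using in_Lk by (simp add: in_Lk_def)
  have "lex_wellordered (shift ` supp c)"
    using lex_wellordered_add_fst[OF wo_supp, of "-1"] by (simp add: shift_def[abs_def])
  moreover have "lex_wellordered {unitvec k i | i. i < k}"
    using len by (intro lex_wellordered_finite) auto
  ultimately have "lex_wellordered (supp c \<union> shift ` supp c \<union> {unitvec k i | i. i < k})"
    using wo_supp len by (intro lex_wellordered_Un[of _ _ k]) auto
  then show ?thesis using W1_gens_subset by (rule lex_wellordered_subset)
qed

lemma W0_positive_cone: "W 0 \<subseteq> positive_cone k"
  using semigroup_gen_positive_cone[OF W1_gens_positive_cone] by simp

lemma lex_wellordered_W0: "lex_wellordered (W 0)"
  using lex_wellordered_semigroup_gen[OF W1_gens_positive_cone lex_wellordered_W1_gens] by simp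

definition shift_gens :: "pt set" where
  "shift_gens = shift ` {q \<in> W 0. 1 < fst q} \<union> W 0 \<union> {(1, zvec k)}"

lemma shift_gens_positive_cone: "shift_gens \<subseteq> positive_cone k"
proof -
  have "shift q \<in> positive_cone k" if "q \<in> W 0" "1 < fst q" for q
    using that W0_positive_cone by (auto simp: positive_cone_def lex_less_def)
  moreover have "(1, zvec k) \<in> positive_cone k"
    by (simp add: positive_cone_def lex_less_def zvec_def)
  ultimately show ?thesis using W0_positive_cone by (auto simp: shift_gens_def)
qed

lemma lex_wellordered_shift_gens: "lex_wellordered shift_gens"
proof -
  have len: "shift_gens \<subseteq> {p. length (snd p) = k}"
    using shift_gens_positive_cone by (auto simp: positive_cone_def)
  have "lex_wellordered {q \<in> W 0. 1 < fst q}"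
    using lex_wellordered_W0 by (rule lex_wellordered_subset) blast
  then have "lex_wellordered (shift ` {q \<in> W 0. 1 < fst q})"
    using lex_wellordered_add_fst[of _ "-1"] by (simp add: shift_def[abs_def])
  moreover have "lex_wellordered {(1, zvec k)}" by (rule lex_wellordered_finite) (simp_all add: zvec_def)
  ultimately show ?thesis
    using len lex_wellordered_W0 unfolding shift_gens_def by (intro lex_wellordered_Un[of _ _ k]) auto
qed

definition admissible :: "pt \<Rightarrow> bool" where
  "admissible p \<longleftrightarrow> p \<in> positive_cone k \<and> (fst p \<le> 1 \<longrightarrow> p \<in> W 0)
     \<and> (1 < fst p \<longrightarrow> shift p \<in> semigroup_gen shift_gens)"

lemma admissible_W0: "p \<in> W 0 \<Longrightarrow> admissible p"
  using W0_positive_cone by (auto simp: admissible_def shift_gens_def intro: semigroup_gen.gen)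

lemma shift_padd_mem_semigroup_gen_shift_gens:
  assumes p: "admissible p" and q: "admissible q" and gt: "1 < fst p + fst q"
  shows "shift (padd p q) \<in> semigroup_gen shift_gens"
proof -
  have gen: "x \<in> shift_gens \<Longrightarrow> x \<in> semigroup_gen shift_gens" for x by (rule semigroup_gen.gen)
  have W0_gen: "x \<in> W 0 \<Longrightarrow> x \<in> semigroup_gen shift_gens" for x
    by (rule gen) (simp add: shift_gens_def)
  show ?thesis
  proof (cases "1 < fst p"; cases "1 < fst q")
    assume "1 < fst p" "1 < fst q"
    then have "shift p \<in> semigroup_gen shift_gens" "shift q \<in> semigroup_gen shift_gens"
      using p q by (simp_all add: admissible_def)
    moreover have "(1, zvec k) \<in> semigroup_gen shift_gens" by (rule gen) (simp add: shift_gens_def)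
    ultimately have "padd (padd (shift p) (shift q)) (1, zvec k) \<in> semigroup_gen shift_gens"
      by (intro semigroup_gen.add)
    moreover have "length (snd p) = k" "length (snd q) = k"
      using p q by (simp_all add: admissible_def positive_cone_def)
    then have "shift (padd p q) = padd (padd (shift p) (shift q)) (1, zvec k)"
      using padd_shift_one[of "shift (padd p q)"] by (simp add: shift_padd padd_ac)
    ultimately show ?thesis by simp
  next
    assume "1 < fst p" "\<not> 1 < fst q"
    then have "shift p \<in> semigroup_gen shift_gens" "q \<in> semigroup_gen shift_gens"
      using p q W0_gen by (simp_all add: admissible_def)
    then show ?thesis by (simp add: shift_padd semigroup_gen.add)
  next
    assume "\<not> 1 < fst p" "1 < fst q"
    then have "shift q \<in> semigroup_gen shift_gens" "p \<in> semigroup_gen shift_gens"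
      using p q W0_gen by (simp_all add: admissible_def)
    then show ?thesis by (simp add: shift_padd padd_commute[of p] semigroup_gen.add)
  next
    assume "\<not> 1 < fst p" "\<not> 1 < fst q"
    then have "padd p q \<in> W 0" using p q by (simp add: admissible_def semigroup_gen.add)
    then have "shift (padd p q) \<in> shift_gens" using gt unfolding shift_gens_def by simp
    then show ?thesis by (rule gen)
  qed
qed

lemma admissible_padd:
  assumes p: "admissible p" and q: "admissible q"
  shows "admissible (padd p q)"
proof -
  have pos: "p \<in> positive_cone k" "q \<in> positive_cone k" using p q by (simp_all add: admissible_def)
  then have "0 \<le> fst p" "0 \<le> fst q" by (simp_all add: fst_nonneg_if_positive_cone)
  then have "padd p q \<in> W 0" if "fst p + fst q \<le> 1"
    using that p q by (simp add: admissible_def semigroup_gen.add)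
  then show ?thesis
    using padd_positive_cone[OF pos] shift_padd_mem_semigroup_gen_shift_gens[OF p q]
    by (simp add: admissible_def)
qed

lemma semigroup_gen_shift_gens_length:
  "x \<in> semigroup_gen shift_gens \<Longrightarrow> length (snd x) = k"
  using semigroup_gen_positive_cone[OF shift_gens_positive_cone] by (auto simp: positive_cone_def)

lemma admissible_oplus:
  assumes "xs \<noteq> []" and xs: "\<forall>x\<in>set xs. admissible x \<and> 1 < fst x"
  shows "admissible (oplus k xs)"
proof -
  have len: "\<forall>x\<in>set xs. length (snd x) = k" using xs by (simp add: admissible_def positive_cone_def)
  have "real (length xs) < (\<Sum>x\<leftarrow>xs. fst x)"
    using sum_list_strict_mono[OF assms(1), of "\<lambda>_. 1" fst] xs by (simp add: sum_list_triv)
  then have gt: "1 < fst (oplus k xs)" using real_length_minus_one[OF assms(1)] by (simp add: fst_oplus)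
  have "psum k (map shift xs) \<in> semigroup_gen shift_gens"
    using xs assms(1) semigroup_gen_shift_gens_length
    by (intro psum_mem_if_padd_closed[where k = k]) (auto simp: admissible_def intro: semigroup_gen.add)
  then show ?thesis
    using gt shift_oplus[OF assms(1) len] length_snd_oplus[OF len]
    by (simp add: admissible_def positive_cone_def lex_less_def)
qed

lemma Wseq_admissible: "p \<in> W n \<Longrightarrow> admissible p"
proof (induction n arbitrary: p)
  case 0
  then show ?case by (rule admissible_W0)
next
  case (Suc n)
  from Suc.prems[unfolded Wseq_Suc] show ?case
  proof (induction rule: semigroup_gen.induct)
    case (gen x)
    then consider "x \<in> W n"
      | xs where "x = oplus k xs" "length xs = n + 2" "\<forall>y\<in>set xs. y \<in> W n \<and> 1 < fst y"
      by blast
    then show ?case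
    proof cases
      case 2
      then have "xs \<noteq> []" "\<forall>y\<in>set xs. admissible y \<and> 1 < fst y" using Suc.IH by auto
      then show ?thesis using 2(1) by (simp add: admissible_oplus)
    qed (rule Suc.IH)
  next
    case (add x y)
    then show ?case by (simp add: admissible_padd)
  qed
qed

lemma Wall_admissible: "p \<in> Wall k c lam \<Longrightarrow> admissible p"
  unfolding Wall_def using Wseq_admissible by blast

theorem lex_wellordered_Wbeta:
  assumes "1 < \<beta>"
  shows "lex_wellordered (Wbeta k c lam \<beta>)"
proof -
  have "Wbeta k c lam \<beta> \<subseteq> (\<lambda>p. (fst p + 1, snd p)) ` semigroup_gen shift_gens"
  proof
    fix p assume p: "p \<in> Wbeta k c lam \<beta>"
    then have "shift p \<in> semigroup_gen shift_gens"
      using assms Wall_admissible by (auto simp: Wbeta_def admissible_def)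
    moreover have "p = (fst (shift p) + 1, snd (shift p))" by simp
    ultimately show "p \<in> (\<lambda>p. (fst p + 1, snd p)) ` semigroup_gen shift_gens" by blast
  qed
  moreover have "lex_wellordered (semigroup_gen shift_gens)"
    by (rule lex_wellordered_semigroup_gen[OF shift_gens_positive_cone lex_wellordered_shift_gens])
  ultimately show ?thesis using lex_wellordered_add_fst lex_wellordered_subset by blast
qed

lemma Wseq_mono: "m \<le> n \<Longrightarrow> W m \<subseteq> W n"
proof (rule lift_Suc_mono_le[of W])
  show "W n \<subseteq> W (Suc n)" for n unfolding Wseq_Suc by (blast intro: semigroup_gen.gen)
qed

lemma Wseq_subset_Wall: "W n \<subseteq> Wall k c lam"
  unfolding Wall_def by blast

lemma padd_mem_Wseq: "x \<in> W n \<Longrightarrow> y \<in> W n \<Longrightarrow> padd x y \<in> W n"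
  by (cases n) (simp_all add: semigroup_gen.add)

lemma padd_mem_Wall:
  assumes "x \<in> Wall k c lam" "y \<in> Wall k c lam"
  shows "padd x y \<in> Wall k c lam"
proof -
  obtain m n where "x \<in> W m" "y \<in> W n" using assms unfolding Wall_def by blast
  then have "x \<in> W (max m n)" "y \<in> W (max m n)" using Wseq_mono by (meson max.cobounded1 max.cobounded2 subsetD)+
  then show ?thesis using padd_mem_Wseq Wseq_subset_Wall by blast
qed

lemma Wall_length: "x \<in> Wall k c lam \<Longrightarrow> length (snd x) = k"
  using Wall_admissible by (simp add: admissible_def positive_cone_def)

lemma Wseq_length: "x \<in> W n \<Longrightarrow> length (snd x) = k"
  using Wall_length Wseq_subset_Wall by blast

lemma Wall_lengths: "set xs \<subseteq> Wall k c lam \<Longrightarrow> \<forall>x\<in>set xs. length (snd x) = k"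
  using Wall_length by blast

lemma ex_Wseq_superset: "set xs \<subseteq> Wall k c lam \<Longrightarrow> \<exists>N. set xs \<subseteq> W N"
proof (induction xs)
  case (Cons x xs)
  then obtain N n where "set xs \<subseteq> W N" "x \<in> W n" unfolding Wall_def by auto
  then have "set (x # xs) \<subseteq> W (max N n)" using Wseq_mono[of N "max N n"] Wseq_mono[of n "max N n"] by auto
  then show ?case by blast
qed simp

lemma oplus_mem_Wall_if_long:
  assumes "set zs \<subseteq> W N" "\<forall>z\<in>set zs. 1 < fst z" "N + 2 \<le> length zs"
  shows "oplus k zs \<in> Wall k c lam"
proof -
  define n where "n = length zs - 2"
  have "length zs = n + 2" "N \<le> n" using assms(3) by (auto simp: n_def)
  then have "set zs \<subseteq> W n" "length zs = n + 2" using assms(1) Wseq_mono[of N n] by auto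
  then have "oplus k zs \<in> W (Suc n)" using assms(2) unfolding Wseq_Suc by (blast intro: semigroup_gen.gen)
  then show ?thesis using Wseq_subset_Wall by blast
qed

definition expandable :: "nat \<Rightarrow> pt \<Rightarrow> bool" where
  "expandable N z \<longleftrightarrow> (\<exists>ys rs. ys \<noteq> [] \<and> set ys \<subseteq> W N \<and> (\<forall>y\<in>set ys. 1 < fst y) \<and>
     set rs \<subseteq> Wall k c lam \<and> shift z = psum k (map shift ys @ rs))"

lemma expandable_oplus:
  assumes "ys \<noteq> []" "set ys \<subseteq> W N" "\<forall>y\<in>set ys. 1 < fst y"
  shows "expandable N (oplus k ys)"
proof -
  have "\<forall>y\<in>set ys. length (snd y) = k" using assms(2) Wseq_length by blast
  then have "shift (oplus k ys) = psum k (map shift ys @ [])" using assms(1) by (simp add: shift_oplus)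
  then show ?thesis using assms unfolding expandable_def by (metis empty_subsetI empty_set)
qed

lemma expandable_padd:
  assumes u: "expandable N u" and v: "v \<in> Wall k c lam"
  shows "expandable N (padd u v)"
proof -
  obtain ys rs where ys: "ys \<noteq> []" "set ys \<subseteq> W N" "\<forall>y\<in>set ys. 1 < fst y"
    and rs: "set rs \<subseteq> Wall k c lam" and eq: "shift u = psum k (map shift ys @ rs)"
    using u unfolding expandable_def by blast
  have "psum k ((map shift ys @ rs) @ [v]) = padd (psum k (map shift ys @ rs)) v"
    using psum_append[of "[v]" k "map shift ys @ rs"] Wall_length[OF v] by simp
  then have "shift (padd u v) = psum k (map shift ys @ rs @ [v])" by (simp add: shift_padd eq)
  moreover have "set (rs @ [v]) \<subseteq> Wall k c lam" using rs v by simp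
  ultimately show ?thesis using ys unfolding expandable_def by blast
qed

lemma Wseq_Suc_cases:
  assumes "z \<in> W (Suc N)"
  shows "z \<in> W N \<or> expandable N z"
  using assms[unfolded Wseq_Suc]
proof (induction rule: semigroup_gen.induct)
  case (gen x)
  then show ?case by (auto intro: expandable_oplus)
next
  case (add x y)
  have xy: "x \<in> Wall k c lam" "y \<in> Wall k c lam"
    using add.hyps Wseq_subset_Wall[of "Suc N", unfolded Wseq_Suc] by blast+
  consider "x \<in> W N" "y \<in> W N" | "expandable N x" | "expandable N y" using add.IH by blast
  then show ?case
  proof cases
    case 1
    then show ?thesis by (simp add: padd_mem_Wseq)
  next
    case 2
    then show ?thesis using expandable_padd[OF _ xy(2)] by blast
  next
    case 3
    then have "expandable N (padd y x)" using expandable_padd[OF _ xy(1)] by blast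
    then show ?thesis by (simp add: padd_commute)
  qed
qed

lemma psum_map_shift_expand:
  assumes "set zs \<subseteq> W (Suc N)" and "\<forall>z\<in>set zs. 1 < fst z"
  shows "\<exists>ys rs. length zs \<le> length ys \<and> set ys \<subseteq> W N \<and> (\<forall>y\<in>set ys. 1 < fst y) \<and>
           set rs \<subseteq> Wall k c lam \<and> psum k (map shift zs) = psum k (map shift ys @ rs)"
  using assms
proof (induction zs)
  case Nil
  show ?case by (rule exI[of _ "[]"], rule exI[of _ "[]"]) simp
next
  case (Cons z zs)
  then obtain ys rs where ys: "length zs \<le> length ys" "set ys \<subseteq> W N" "\<forall>y\<in>set ys. 1 < fst y"
    and rs: "set rs \<subseteq> Wall k c lam" and eq: "psum k (map shift zs) = psum k (map shift ys @ rs)"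
    by auto
  have len_ys: "\<forall>x\<in>set (map shift ys). length (snd x) = k"
    using ys(2) Wseq_length by auto
  from Cons.prems Wseq_Suc_cases[of z N] consider "z \<in> W N"
    | ys' rs' where "ys' \<noteq> []" "set ys' \<subseteq> W N" "\<forall>y\<in>set ys'. 1 < fst y" "set rs' \<subseteq> Wall k c lam"
        "shift z = psum k (map shift ys' @ rs')"
    unfolding expandable_def by auto
  then show ?case
  proof cases
    case 1
    have "psum k (map shift (z # zs)) = psum k (map shift (z # ys) @ rs)" using eq by simp
    moreover have "length (z # zs) \<le> length (z # ys)" "set (z # ys) \<subseteq> W N"
      "\<forall>y\<in>set (z # ys). 1 < fst y" using 1 Cons.prems ys by auto
    ultimately show ?thesis using rs by blast
  next
    case 2
    have len_ys': "\<forall>x\<in>set (map shift ys'). length (snd x) = k"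
      using 2(2) Wseq_length by auto
    have "psum k (map shift (z # zs)) = psum k (map shift (ys' @ ys) @ rs' @ rs)"
      using 2(5) eq Wall_lengths[OF rs] Wall_lengths[OF 2(4)] len_ys len_ys' by (simp add: psum_append ball_Un padd_ac)
    moreover have "length (z # zs) \<le> length (ys' @ ys)" using 2(1) ys(1) by (cases ys') auto
    moreover have "set (ys' @ ys) \<subseteq> W N" "\<forall>y\<in>set (ys' @ ys). 1 < fst y" "set (rs' @ rs) \<subseteq> Wall k c lam"
      using 2 ys rs by auto
    ultimately show ?thesis by blast
  qed
qed

lemma oplus_mem_Wall:
  assumes "set zs \<subseteq> W N" and "\<forall>z\<in>set zs. 1 < fst z" and "2 \<le> length zs"
  shows "oplus k zs \<in> Wall k c lam"
  using assms
proof (induction N arbitrary: zs)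
  case 0
  then show ?case by (intro oplus_mem_Wall_if_long[of zs 0]) auto
next
  case (Suc N)
  obtain ys rs where ys: "length zs \<le> length ys" "set ys \<subseteq> W N" "\<forall>y\<in>set ys. 1 < fst y"
    and rs: "set rs \<subseteq> Wall k c lam" and eq: "psum k (map shift zs) = psum k (map shift ys @ rs)"
    using psum_map_shift_expand[OF Suc.prems(1,2)] by blast
  have ys_Wall: "oplus k ys \<in> Wall k c lam" using Suc.IH[OF ys(2,3)] ys(1) Suc.prems(3) by simp
  have ne: "zs \<noteq> []" "ys \<noteq> []" using ys(1) Suc.prems(3) by auto
  have len_zs: "\<forall>x\<in>set zs. length (snd x) = k" using Suc.prems(1) Wseq_length by blast
  have len_ys: "\<forall>x\<in>set ys. length (snd x) = k" using ys(2) Wseq_length by blast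
  have "shift (oplus k zs) = psum k (map shift ys @ rs)" using shift_oplus[OF ne(1) len_zs] eq by simp
  also have "\<dots> = padd (shift (oplus k ys)) (psum k rs)"
    using psum_append[OF Wall_lengths[OF rs]] shift_oplus[OF ne(2) len_ys] by simp
  also have "\<dots> = shift (psum k (oplus k ys # rs))" by (simp add: shift_padd)
  finally have "shift (oplus k zs) = shift (psum k (oplus k ys # rs))" .
  then have "oplus k zs = psum k (oplus k ys # rs)" by (simp add: shift_inject)
  moreover have "psum k (oplus k ys # rs) \<in> Wall k c lam"
    using ys_Wall rs Wall_length padd_mem_Wall by (intro psum_mem_if_padd_closed[where k = k]) auto
  ultimately show ?case by simp
qed

lemma oplus_mem_Wbeta:
  assumes "1 < \<beta>" and "2 \<le> length xs" and xs: "set xs \<subseteq> Wbeta k c lam \<beta>"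
  shows "oplus k xs \<in> Wbeta k c lam \<beta>"
proof -
  have Wall: "set xs \<subseteq> Wall k c lam" and ge: "\<forall>x\<in>set xs. \<beta> \<le> fst x"
    using xs by (auto simp: Wbeta_def)
  obtain N where N: "set xs \<subseteq> W N" using ex_Wseq_superset[OF Wall] by blast
  have "\<forall>x\<in>set xs. 1 < fst x" using ge assms(1) by (auto intro: less_le_trans)
  then have "oplus k xs \<in> Wall k c lam" using oplus_mem_Wall[OF N _ assms(2)] by blast
  moreover have "\<beta> \<le> fst (oplus k xs)"
  proof -
    have "real (length xs) * \<beta> \<le> (\<Sum>x\<leftarrow>xs. fst x)"
      using sum_list_mono[of xs "\<lambda>_. \<beta>" fst] ge by (simp add: sum_list_triv)
    moreover have "0 \<le> (real (length xs) - 1) * (\<beta> - 1)" using assms(1,2) by simp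
    ultimately show ?thesis
      using real_length_minus_one[of xs] assms(2) by (auto simp: fst_oplus algebra_simps)
  qed
  ultimately show ?thesis by (simp add: Wbeta_def)
qed

end

theorem proposition5p1:
  fixes k :: nat and c :: "pt \<Rightarrow> real" and lam \<beta> :: real
  assumes "in_Lk k c"
    and "leading_lambda_z k c lam"
    and "0 < lam" and "lam < 1"
    and "\<beta> > 1"
  shows "lex_wellordered (Wbeta k c lam \<beta>) \<and>
         (\<forall>m \<ge> 2. \<forall>xs. length xs = m \<and> set xs \<subseteq> Wbeta k c lam \<beta> \<longrightarrow>
             psub (psum k xs) (real (m - 1), zvec k) \<in> Wbeta k c lam \<beta>)"
proof -
  interpret W_construction k c lam using assms(1,2) by unfold_locales
  show ?thesis
    using lex_wellordered_Wbeta[OF assms(5)] oplus_mem_Wbeta[OF assms(5)] by (auto simp: oplus_def)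
qed

end
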